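(* Let $n$ be an odd positive integer and let $A,B,C,D\in\{\pm1\}^{n\times n}$ be circulant good matrices of order $n$ with defining rows $(a_0,\dotsc,a_{n-1})$, $(b_0,\dotsc,b_{n-1})$, $(c_0,\dotsc,c_{n-1})$, $(d_0,\dotsc,d_{n-1})$ respectively. Then for all $1\leq k<n$, \[ a_k b_k c_k d_k = -a_{2k \bmod n}\, b_0 c_0 d_0 . \]
   Context: For a square matrix $X=(x_{i,j})_{0\le i,j<n}$: $X$ is symmetric if $x_{i,j}=x_{j,i}$ for all $i,j$; $X$ is skew if its diagonal entries are $1$ and $x_{i,j}=-x_{j,i}$ for $i\neq j$; $X$ is circulant if $x_{i,j}=x_{i-1,j-1}$ for all $i,j$ (indices mod $n$). Four matrices $A,B,C,D\in\{\pm1\}^{n\times n}$ are called (circulant) good matrices of order $n$ if they are all circulant, $A$ is skew, $B,C,D$ are symmetric, and $AA^T+B^2+C^2+D^2=4nI_n$. The defining row of a circulant matrix is its first row. *)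

theory Defs
  imports Main
begin

text \<open>An n x n integer matrix is represented as a function nat => nat => int;
only entries with indices < n are relevant (rows/columns indexed 0..n-1).\<close>

definition pm1_mat :: "nat \<Rightarrow> (nat \<Rightarrow> nat \<Rightarrow> int) \<Rightarrow> bool" where
  "pm1_mat n X \<longleftrightarrow> (\<forall>i<n. \<forall>j<n. X i j = 1 \<or> X i j = -1)"

definition symmetric_mat :: "nat \<Rightarrow> (nat \<Rightarrow> nat \<Rightarrow> int) \<Rightarrow> bool" where
  "symmetric_mat n X \<longleftrightarrow> (\<forall>i<n. \<forall>j<n. X i j = X j i)"

definition skew_mat :: "nat \<Rightarrow> (nat \<Rightarrow> nat \<Rightarrow> int) \<Rightarrow> bool" where
  "skew_mat n X \<longleftrightarrow> (\<forall>i<n. X i i = 1) \<and> (\<forall>i<n. \<forall>j<n. i \<noteq> j \<longrightarrow> X i j = - X j i)"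

definition circulant_mat :: "nat \<Rightarrow> (nat \<Rightarrow> nat \<Rightarrow> int) \<Rightarrow> bool" where
  "circulant_mat n X \<longleftrightarrow>
     (\<forall>i<n. \<forall>j<n. X i j = X ((i + n - 1) mod n) ((j + n - 1) mod n))"

definition good_matrices ::
  "nat \<Rightarrow> (nat \<Rightarrow> nat \<Rightarrow> int) \<Rightarrow> (nat \<Rightarrow> nat \<Rightarrow> int) \<Rightarrow> (nat \<Rightarrow> nat \<Rightarrow> int)
       \<Rightarrow> (nat \<Rightarrow> nat \<Rightarrow> int) \<Rightarrow> bool" where
  "good_matrices n A B C D \<longleftrightarrow>
     pm1_mat n A \<and> pm1_mat n B \<and> pm1_mat n C \<and> pm1_mat n D \<and>
     circulant_mat n A \<and> circulant_mat n B \<and> circulant_mat n C \<and> circulant_mat n D \<and>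
     skew_mat n A \<and> symmetric_mat n B \<and> symmetric_mat n C \<and> symmetric_mat n D \<and>
     (\<forall>i<n. \<forall>j<n.
        (\<Sum>k<n. A i k * A j k) + (\<Sum>k<n. B i k * B k j) + (\<Sum>k<n. C i k * C k j)
        + (\<Sum>k<n. D i k * D k j) = (if i = j then 4 * int n else 0))"

end

theory Submission
  imports Defs
begin

(* Let a, b, c, d be the defining rows, extended periodically to the integers, and write
   n = 2m+1.  Orthogonality of rows h and n-h says that the periodic autocorrelations of
   a, b, c, d at shift 2h add up to 0.  Sum the autocorrelation of x as x(t-h) x(t+h) over
   the centered period |t| <= m and pair t with -t: by (skew-)symmetry of x the two terms
   agree (except at t = h in the skew case), so the sum is determined modulo 8 by the sum
   over 1 <= t <= m, and for +-1 values a sum is congruent modulo 4 to its number of terms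
   minus 1 plus the product.  Up to the sign coming from skewness, that product is the
   product of x(t+h) over a full period with the factor x_h removed, so shift invariance
   evaluates it to b_0 b_h for a symmetric row and to -a_h for the skew one.
   Adding up the four congruences forces (-a_h a_2h)(b_0 b_h)(c_0 c_h)(d_0 d_h) = 1, which
   is the claim for k = h <= m; for k > m apply it to h = n-k. *)

lemma bij_betw_add_mod_int:
  fixes N a h :: int
  assumes "0 < N"
  shows "bij_betw (\<lambda>t. (t + h) mod N) {a..<a+N} {0..<N}"
proof (rule bij_betw_byWitness[where f' = "\<lambda>r. a + (r - h - a) mod N"])
  show "\<forall>t\<in>{a..<a+N}. a + ((t + h) mod N - h - a) mod N = t"
  proof
    fix t :: int assume "t \<in> {a..<a+N}"
    moreover have "((t + h) mod N - h - a) mod N = (t - a) mod N"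
      by (metis add_diff_cancel_right' mod_diff_left_eq diff_diff_eq)
    ultimately show "a + ((t + h) mod N - h - a) mod N = t" by simp
  qed
  show "\<forall>r\<in>{0..<N}. (a + (r - h - a) mod N + h) mod N = r"
  proof
    fix r :: int assume "r \<in> {0..<N}"
    moreover have "(a + (r - h - a) mod N + h) mod N = (a + (r - h - a) + h) mod N"
      by (metis mod_add_left_eq mod_add_right_eq)
    ultimately show "(a + (r - h - a) mod N + h) mod N = r" by simp
  qed
qed (use assms in auto)

context comm_monoid_set
begin

lemma int_period_shift:
  fixes N a h :: int
  assumes "0 < N" and "\<And>t. g (t mod N) = g t"
  shows "F (\<lambda>t. g (t + h)) {a..<a+N} = F g {0..<N}"
proof -
  have "F (\<lambda>t. g (t + h)) {a..<a+N} = F (\<lambda>t. g ((t + h) mod N)) {a..<a+N}"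
    using assms(2) by simp
  also have "\<dots> = F g {0..<N}"
    using reindex_bij_betw[OF bij_betw_add_mod_int[OF assms(1)]] by (simp add: comp_def)
  finally show ?thesis .
qed

lemma int_symmetric_split:
  "F g {-int m..int m} = g 0 \<^bold>* F (\<lambda>t. g t \<^bold>* g (-t)) {1..int m}"
proof -
  have "{-int m..int m} = {0} \<union> ({1..int m} \<union> uminus ` {1..int m})"
    by (auto simp: image_iff intro: bexI[where x = "- _"])
  moreover have "F g (uminus ` {1..int m}) = F (\<lambda>t. g (-t)) {1..int m}"
    by (subst reindex) (auto simp: comp_def)
  ultimately show ?thesis
    by (simp add: union_disjoint distrib disjoint_iff)
qed

end

lemma prod_pm1:
  "\<forall>t\<in>S. y t \<in> {1, -1::int} \<Longrightarrow> prod y S \<in> {1, -1}"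
  by (induction S rule: infinite_finite_induct) auto

lemma sum_pm1_mod4:
  fixes y :: "'a \<Rightarrow> int"
  assumes "finite S" and "\<forall>t\<in>S. y t \<in> {1, -1}"
  shows "4 dvd sum y S - (int (card S) - 1 + prod y S)"
  using assms
proof (induction S rule: finite_induct)
  case (insert x F)
  have "sum y (insert x F) - (int (card (insert x F)) - 1 + prod y (insert x F))
      = (sum y F - (int (card F) - 1 + prod y F)) + (y x - 1) * (1 - prod y F)"
    using insert.hyps by (simp add: algebra_simps)
  moreover have "4 dvd (y x - 1) * (1 - prod y F)"
    using insert.prems prod_pm1[of F y] by auto
  ultimately show ?case
    using insert.IH insert.prems by (metis dvd_add insert_iff)
qed simp

(* The periodic autocorrelation of x at shift 2h when x has period 2m+1. *)
definition centered_autocorr :: "nat \<Rightarrow> (int \<Rightarrow> int) \<Rightarrow> int \<Rightarrow> int" where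
  "centered_autocorr m x h = (\<Sum>t\<in>{-int m..int m}. x (t - h) * x (t + h))"

lemma prod_centered_window_shift:
  fixes x :: "int \<Rightarrow> int"
  assumes "\<And>t. x (t mod (2 * int m + 1)) = x t"
  shows "(\<Prod>t\<in>{-int m..int m}. x (t + h)) = (\<Prod>t\<in>{-int m..int m}. x t)"
proof -
  have window: "{-int m..int m} = {-int m..<-int m + (2 * int m + 1)}"
    by auto
  have N: "0 < 2 * int m + 1"
    by simp
  have "(\<Prod>t\<in>{-int m..<-int m + (2 * int m + 1)}. x (t + h))
      = (\<Prod>t\<in>{-int m..<-int m + (2 * int m + 1)}. x (t + 0))"
    using prod.int_period_shift[where g = x, OF N assms, where a = "-int m" and h = h]
      prod.int_period_shift[where g = x, OF N assms, where a = "-int m" and h = 0]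
    by (rule trans[OF _ sym])
  then show ?thesis
    unfolding window by simp
qed

lemma pm1_mult_eq_iff:
  fixes u v w :: int
  assumes "u \<in> {1, -1}"
  shows "u * v = w \<longleftrightarrow> v = u * w"
  using assms by auto

lemma prod_shifted_pairs_even:
  fixes x :: "int \<Rightarrow> int"
  assumes periodic: "\<And>t. x (t mod (2 * int m + 1)) = x t"
    and pm1: "\<And>t. x t \<in> {1, -1}"
    and x_even: "\<And>t. x (-t) = x t"
  shows "(\<Prod>t\<in>{1..int m}. x (t - h) * x (t + h)) = x 0 * x h"
proof -
  have sq: "x t * x t = 1" for t
    using pm1[of t] by auto
  have "x (h - t) = x (t - h)" for t
    using x_even[of "t - h"] by simp
  then have "x h * (\<Prod>t\<in>{1..int m}. x (t - h) * x (t + h)) = (\<Prod>t\<in>{-int m..int m}. x (t + h))"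
    using prod.int_symmetric_split[of "\<lambda>t. x (t + h)" m] by (simp add: prod.distrib)
  also have "\<dots> = x 0"
    using prod_centered_window_shift[where x = x, OF periodic] prod.int_symmetric_split[of x m]
    by (simp add: x_even sq)
  finally show ?thesis
    by (simp add: pm1_mult_eq_iff[OF pm1] mult.commute)
qed

lemma prod_shifted_pairs_skew:
  fixes x :: "int \<Rightarrow> int"
  assumes periodic: "\<And>t. x (t mod (2 * int m + 1)) = x t"
    and pm1: "\<And>t. x t \<in> {1, -1}"
    and x0: "x 0 = 1"
    and x_odd: "\<And>t. t \<noteq> 0 \<Longrightarrow> \<bar>t\<bar> \<le> 2 * int m \<Longrightarrow> x (-t) = - x t"
    and h: "h \<in> {1..int m}"
  shows "(\<Prod>t\<in>{1..int m}. x (t - h) * x (t + h)) = - x h"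
proof -
  have sq: "x t * x t = 1" for t
    using pm1[of t] by auto
  have flip: "x (h - t) = (if t = h then 1 else -1) * x (t - h)" if "t \<in> {1..int m}" for t
    using x_odd[of "t - h"] that h x0 by auto
  have "(\<Prod>t\<in>{-int m..int m}. x (t + h)) = x h * (\<Prod>t\<in>{1..int m}. x (t + h) * x (h - t))"
    using prod.int_symmetric_split[of "\<lambda>t. x (t + h)" m] by simp
  also have "(\<Prod>t\<in>{1..int m}. x (t + h) * x (h - t))
      = (\<Prod>t\<in>{1..int m}. (if t = h then 1 else -1) * (x (t - h) * x (t + h)))"
    by (rule prod.cong) (simp_all add: flip)
  also have "\<dots> = (\<Prod>t\<in>{1..int m}. if t = h then 1 else -1)
      * (\<Prod>t\<in>{1..int m}. x (t - h) * x (t + h))"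
    by (rule prod.distrib)
  also have "(\<Prod>t\<in>{1..int m}. if t = h then 1 else -1) = (-1::int) ^ (m - 1)"
    using h by (simp add: prod.If_cases Diff_eq[symmetric])
  finally have "x h * ((-1) ^ (m - 1) * (\<Prod>t\<in>{1..int m}. x (t - h) * x (t + h))) = (-1) ^ m"
    using prod_centered_window_shift[where x = x, OF periodic] prod.int_symmetric_split[of x m]
    by (simp add: x0 x_odd sq)
  moreover have "(-1::int) ^ m = (-1) ^ (m - 1) * -1"
    using h by (cases m) auto
  ultimately have "(-1) ^ (m - 1) * (x h * (\<Prod>t\<in>{1..int m}. x (t - h) * x (t + h)))
      = (-1) ^ (m - 1) * -1"
    by (simp add: mult.left_commute)
  then have "x h * (\<Prod>t\<in>{1..int m}. x (t - h) * x (t + h)) = -1"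
    by (simp only: mult_cancel_left power_eq_0_iff) simp
  then show ?thesis
    by (simp add: pm1_mult_eq_iff[OF pm1])
qed

lemma centered_autocorr_even_mod8:
  fixes x :: "int \<Rightarrow> int"
  assumes periodic: "\<And>t. x (t mod (2 * int m + 1)) = x t"
    and pm1: "\<And>t. x t \<in> {1, -1}"
    and x_even: "\<And>t. x (-t) = x t"
  shows "8 dvd centered_autocorr m x h - (2 * int m - 1 + 2 * x 0 * x h)"
proof -
  define y where "y = (\<lambda>t. x (t - h) * x (t + h))"
  have y_pm1: "y t \<in> {1, -1}" for t
    using pm1[of "t - h"] pm1[of "t + h"] by (auto simp: y_def)
  have y_even: "y (-t) = y t" for t
  proof -
    have "x (-t - h) = x (t + h)" "x (-t + h) = x (t - h)"
      using x_even[of "t + h"] x_even[of "t - h"] by simp_all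
    then show ?thesis by (simp add: y_def)
  qed
  have "y 0 = 1"
    using x_even[of h] pm1[of h] by (auto simp: y_def)
  have "centered_autocorr m x h = sum y {-int m..int m}"
    unfolding centered_autocorr_def y_def ..
  also have "\<dots> = 1 + 2 * (\<Sum>t\<in>{1..int m}. y t)"
    using sum.int_symmetric_split[of y m] y_even \<open>y 0 = 1\<close> by (simp add: sum_distrib_left)
  finally have sum_y: "centered_autocorr m x h = 1 + 2 * (\<Sum>t\<in>{1..int m}. y t)" .
  have "(\<Prod>t\<in>{1..int m}. y t) = x 0 * x h"
    unfolding y_def by (rule prod_shifted_pairs_even[where x = x, OF periodic pm1 x_even])
  then have "4 dvd (\<Sum>t\<in>{1..int m}. y t) - (int m - 1 + x 0 * x h)"
    using sum_pm1_mod4[of "{1..int m}" y] y_pm1 by simp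
  then have "2 * 4 dvd 2 * ((\<Sum>t\<in>{1..int m}. y t) - (int m - 1 + x 0 * x h))"
    by (rule mult_dvd_mono[OF dvd_refl])
  then show ?thesis
    unfolding sum_y by (simp add: algebra_simps)
qed

lemma centered_autocorr_skew_mod8:
  fixes x :: "int \<Rightarrow> int"
  assumes periodic: "\<And>t. x (t mod (2 * int m + 1)) = x t"
    and pm1: "\<And>t. x t \<in> {1, -1}"
    and x0: "x 0 = 1"
    and x_odd: "\<And>t. t \<noteq> 0 \<Longrightarrow> \<bar>t\<bar> \<le> 2 * int m \<Longrightarrow> x (-t) = - x t"
    and h: "h \<in> {1..int m}"
  shows "8 dvd centered_autocorr m x h - (2 * int m - 5 - 2 * x h * x (2 * h))"
proof -
  define y where "y = (\<lambda>t. x (t - h) * x (t + h))"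
  have y_pm1: "y t \<in> {1, -1}" for t
    using pm1[of "t - h"] pm1[of "t + h"] by (auto simp: y_def)
  have y_pair: "y t + y (-t) = 2 * y t - (if t = h then 2 * x (2 * h) else 0)"
    if "t \<in> {1..int m}" for t
  proof (cases "t = h")
    case True
    then show ?thesis
      using x_odd[of "2 * h"] h x0 by (simp add: y_def)
  next
    case False
    have "x (-t - h) = - x (t + h)" "x (-t + h) = - x (t - h)"
      using x_odd[of "t + h"] x_odd[of "t - h"] that h False by (simp_all add: abs_le_iff)
    then show ?thesis
      using False by (simp add: y_def)
  qed
  have "y 0 = -1"
    using x_odd[of h] h pm1[of h] by (auto simp: y_def)
  have "centered_autocorr m x h = sum y {-int m..int m}"
    unfolding centered_autocorr_def y_def ..
  also have "\<dots> = 2 * (\<Sum>t\<in>{1..int m}. y t) - 2 * x (2 * h) - 1"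
    using sum.int_symmetric_split[of y m] h \<open>y 0 = -1\<close>
    by (simp add: y_pair sum_subtractf sum_distrib_left)
  finally have sum_y: "centered_autocorr m x h = 2 * (\<Sum>t\<in>{1..int m}. y t) - 2 * x (2 * h) - 1" .
  have "(\<Prod>t\<in>{1..int m}. y t) = - x h"
    unfolding y_def by (rule prod_shifted_pairs_skew[where x = x, OF periodic pm1 x0 x_odd h])
  then have "4 dvd (\<Sum>t\<in>{1..int m}. y t) - (int m - 1 - x h)"
    using sum_pm1_mod4[of "{1..int m}" y] y_pm1 by simp
  then have "2 * 4 dvd 2 * ((\<Sum>t\<in>{1..int m}. y t) - (int m - 1 - x h))"
    by (rule mult_dvd_mono[OF dvd_refl])
  moreover have "8 dvd 2 * (1 - x h) * (1 - x (2 * h))"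
    using pm1[of h] pm1[of "2 * h"] by auto
  moreover have "centered_autocorr m x h - (2 * int m - 5 - 2 * x h * x (2 * h))
      = 2 * ((\<Sum>t\<in>{1..int m}. y t) - (int m - 1 - x h)) + 2 * (1 - x h) * (1 - x (2 * h))"
    unfolding sum_y by (simp add: algebra_simps)
  ultimately show ?thesis
    by (metis dvd_add mult_2 numeral_Bit0)
qed

definition row_seq :: "nat \<Rightarrow> (nat \<Rightarrow> nat \<Rightarrow> int) \<Rightarrow> int \<Rightarrow> int" where
  "row_seq n X t = X 0 (nat (t mod int n))"

lemma row_seq_mod [simp]: "row_seq n X (t mod int n) = row_seq n X t"
  by (simp add: row_seq_def)

lemma row_seq_cong: "t mod int n = s mod int n \<Longrightarrow> row_seq n X t = row_seq n X s"
  by (simp add: row_seq_def)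

lemma row_seq_of_nat: "j < n \<Longrightarrow> row_seq n X (int j) = X 0 j"
  by (simp add: row_seq_def)

lemma row_seq_pm1:
  assumes "0 < n" and "pm1_mat n X"
  shows "row_seq n X t \<in> {1, -1}"
proof -
  have "nat (t mod int n) < n"
    using assms(1) by (simp add: nat_less_iff)
  then show ?thesis
    using assms(2) by (simp add: row_seq_def pm1_mat_def)
qed

lemma circulant_mat_eq_row_seq:
  assumes "circulant_mat n X" and "i < n" and "j < n"
  shows "X i j = row_seq n X (int j - int i)"
  using assms(2,3)
proof (induction i arbitrary: j)
  case 0
  then show ?case
    by (simp add: row_seq_of_nat)
next
  case (Suc i)
  have "X (Suc i) j = X ((Suc i + n - 1) mod n) ((j + n - 1) mod n)"
    using assms(1) Suc.prems unfolding circulant_mat_def by blast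
  also have "(Suc i + n - 1) mod n = i"
    using Suc.prems by simp
  also have "X i ((j + n - 1) mod n) = row_seq n X (int ((j + n - 1) mod n) - int i)"
    using Suc by simp
  also have "\<dots> = row_seq n X (int j - int (Suc i))"
  proof (rule row_seq_cong)
    have "int ((j + n - 1) mod n) = (int j + int n - 1) mod int n"
      using Suc.prems by (simp add: zmod_int)
    then have "(int ((j + n - 1) mod n) - int i) mod int n
        = (int j - int (Suc i) + int n) mod int n"
      by (simp add: mod_diff_left_eq algebra_simps)
    then show "(int ((j + n - 1) mod n) - int i) mod int n = (int j - int (Suc i)) mod int n"
      by simp
  qed
  finally show ?case .
qed

lemma row_seq_uminus_symmetric:
  assumes "0 < n" and "circulant_mat n X" and "symmetric_mat n X"
  shows "row_seq n X (-t) = row_seq n X t"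
proof -
  define j where "j = nat (t mod int n)"
  have j: "j < n" "int j = t mod int n"
    using assms(1) by (simp_all add: j_def nat_less_iff)
  have "row_seq n X t = X j 0"
    using assms(1,3) j(1) unfolding row_seq_def j_def[symmetric] symmetric_mat_def by blast
  also have "\<dots> = row_seq n X (-t)"
    using circulant_mat_eq_row_seq[OF assms(2) j(1) assms(1)] j(2)
    by (metis row_seq_cong diff_0 mod_minus_eq of_nat_0)
  finally show ?thesis ..
qed

lemma row_seq_uminus_skew:
  assumes "0 < n" and "circulant_mat n X" and "skew_mat n X" and "t mod int n \<noteq> 0"
  shows "row_seq n X (-t) = - row_seq n X t"
proof -
  define j where "j = nat (t mod int n)"
  have j: "j < n" "int j = t mod int n"
    using assms(1) by (simp_all add: j_def nat_less_iff)
  then have "j \<noteq> 0"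
    using assms(4) by auto
  have "row_seq n X t = - X j 0"
    using assms(1,3) j(1) \<open>j \<noteq> 0\<close>
    unfolding row_seq_def j_def[symmetric] skew_mat_def by blast
  also have "X j 0 = row_seq n X (-t)"
    using circulant_mat_eq_row_seq[OF assms(2) j(1) assms(1)] j(2)
    by (metis row_seq_cong diff_0 mod_minus_eq of_nat_0)
  finally show ?thesis
    by simp
qed

lemma row_seq_zero_skew: "0 < n \<Longrightarrow> skew_mat n X \<Longrightarrow> row_seq n X 0 = 1"
  by (simp add: row_seq_def skew_mat_def)

lemma sum_lessThan_eq_centered_window:
  fixes g :: "int \<Rightarrow> 'a::comm_monoid_add"
  assumes "\<And>t. g (t mod (2 * int m + 1)) = g t"
  shows "(\<Sum>l<2 * m + 1. g (int l)) = (\<Sum>t\<in>{-int m..int m}. g t)"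
proof -
  have "(\<Sum>l<2 * m + 1. g (int l)) = sum g (int ` {..<2 * m + 1})"
    by (simp add: sum.reindex)
  also have "int ` {..<2 * m + 1} = {0..<2 * int m + 1}"
    using image_atLeastZeroLessThan_int[of "2 * int m + 1"]
    by (simp add: nat_add_distrib nat_mult_distrib)
  also have "sum g {0..<2 * int m + 1}
      = (\<Sum>t\<in>{-int m..<-int m + (2 * int m + 1)}. g (t + 0))"
    by (rule sum.int_period_shift[symmetric]) (use assms in simp_all)
  also have "{-int m..<-int m + (2 * int m + 1)} = {-int m..int m}"
    by auto
  finally show ?thesis
    by simp
qed

lemma circulant_mat_row_products_sum:
  assumes "circulant_mat n X" and n: "n = 2 * m + 1" and h: "0 < h" "h < n"
  shows "(\<Sum>l<n. X h l * X (n - h) l) = centered_autocorr m (row_seq n X) (int h)"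
proof -
  let ?g = "\<lambda>t. row_seq n X (t - int h) * row_seq n X (t + int h)"
  have "X h l * X (n - h) l = ?g (int l)" if "l < n" for l
  proof -
    have "row_seq n X (int l - int (n - h)) = row_seq n X (int l + int h)"
      using h by (intro row_seq_cong) (simp add: mod_eq_dvd_iff)
    then show ?thesis
      using circulant_mat_eq_row_seq[OF assms(1)] that h by simp
  qed
  then have "(\<Sum>l<n. X h l * X (n - h) l) = (\<Sum>l<n. ?g (int l))"
    by simp
  moreover have "?g (t mod (2 * int m + 1)) = ?g t" for t
  proof -
    have "row_seq n X (t mod int n - int h) = row_seq n X (t - int h)"
      by (rule row_seq_cong) (simp add: mod_diff_left_eq)
    moreover have "row_seq n X (t mod int n + int h) = row_seq n X (t + int h)"
      by (rule row_seq_cong) (simp add: mod_add_left_eq)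
    ultimately show ?thesis
      using n by (simp only: of_nat_add of_nat_mult of_nat_numeral of_nat_1)
  qed
  ultimately show ?thesis
    unfolding centered_autocorr_def using sum_lessThan_eq_centered_window[of ?g m, folded n] by simp
qed

lemma good_matrices_centered_autocorr_sum:
  assumes good: "good_matrices n A B C D" and n: "n = 2 * m + 1" and h: "0 < h" "h < n"
  shows "centered_autocorr m (row_seq n A) (int h) + centered_autocorr m (row_seq n B) (int h)
       + centered_autocorr m (row_seq n C) (int h) + centered_autocorr m (row_seq n D) (int h) = 0"
proof -
  have "n - h < n" and "h \<noteq> n - h"
    using n h by arith+
  then have "(\<Sum>l<n. A h l * A (n - h) l) + (\<Sum>l<n. B h l * B l (n - h))
      + (\<Sum>l<n. C h l * C l (n - h)) + (\<Sum>l<n. D h l * D l (n - h)) = 0"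
    using good h(2) unfolding good_matrices_def by presburger
  moreover have "(\<Sum>l<n. X h l * X l (n - h)) = (\<Sum>l<n. X h l * X (n - h) l)"
    if "symmetric_mat n X" for X
    using that \<open>n - h < n\<close> by (intro sum.cong) (simp_all add: symmetric_mat_def)
  ultimately show ?thesis
    using good circulant_mat_row_products_sum[OF _ n h] by (simp add: good_matrices_def)
qed

lemma pm1_sum_dvd4_imp_prod_eq_1:
  fixes u v w z :: int
  assumes "4 dvd u + v + w + z"
    and "u \<in> {1, -1}" "v \<in> {1, -1}" "w \<in> {1, -1}" "z \<in> {1, -1}"
  shows "u * v * w * z = 1"
  using assms by (elim insertE emptyE) simp_all

lemma pm1_sign_identity_mod8:
  fixes m a1 a2 b0 b1 c0 c1 d0 d1 sa sb sc sd :: int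
  assumes pm1: "a1 \<in> {1, -1}" "a2 \<in> {1, -1}" "b0 \<in> {1, -1}" "b1 \<in> {1, -1}"
      "c0 \<in> {1, -1}" "c1 \<in> {1, -1}" "d0 \<in> {1, -1}" "d1 \<in> {1, -1}"
    and sum: "sa + sb + sc + sd = 0"
    and "8 dvd sa - (2 * m - 5 - 2 * a1 * a2)"
    and "8 dvd sb - (2 * m - 1 + 2 * b0 * b1)"
    and "8 dvd sc - (2 * m - 1 + 2 * c0 * c1)"
    and "8 dvd sd - (2 * m - 1 + 2 * d0 * d1)"
  shows "a1 * b1 * c1 * d1 = - a2 * b0 * c0 * d0"
proof -
  have "8 dvd (sa - (2 * m - 5 - 2 * a1 * a2)) + (sb - (2 * m - 1 + 2 * b0 * b1))
      + (sc - (2 * m - 1 + 2 * c0 * c1)) + (sd - (2 * m - 1 + 2 * d0 * d1))"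
    using assms(10-13) by (intro dvd_add)
  also have "\<dots> = 8 * (1 - m) - 2 * (- a1 * a2 + b0 * b1 + c0 * c1 + d0 * d1)"
    using sum by (simp add: algebra_simps)
  finally have "8 dvd 8 * (1 - m) - 2 * (- a1 * a2 + b0 * b1 + c0 * c1 + d0 * d1)" .
  from dvd_diff[OF dvd_triv_left[of 8 "1 - m"] this]
  have "2 * 4 dvd 2 * (- a1 * a2 + b0 * b1 + c0 * c1 + d0 * d1)"
    by (simp add: algebra_simps)
  then have "4 dvd - a1 * a2 + b0 * b1 + c0 * c1 + d0 * d1"
    by (subst (asm) dvd_mult_cancel_left) simp
  moreover have "- a1 * a2 \<in> {1, -1}" using pm1(1,2) by auto
  moreover have "b0 * b1 \<in> {1, -1}" using pm1(3,4) by auto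
  moreover have "c0 * c1 \<in> {1, -1}" using pm1(5,6) by auto
  moreover have "d0 * d1 \<in> {1, -1}" using pm1(7,8) by auto
  ultimately have "(- a1 * a2) * (b0 * b1) * (c0 * c1) * (d0 * d1) = 1"
    by (rule pm1_sum_dvd4_imp_prod_eq_1)
  then show ?thesis
    using pm1(2,3,5,7) by (elim insertE emptyE) (simp_all add: algebra_simps)
qed

lemma good_matrices_row_seq_identity_le:
  assumes good: "good_matrices n A B C D" and n: "n = 2 * m + 1" and h: "0 < h" "h \<le> m"
  shows "row_seq n A (int h) * row_seq n B (int h) * row_seq n C (int h) * row_seq n D (int h)
       = - row_seq n A (2 * int h) * row_seq n B 0 * row_seq n C 0 * row_seq n D 0"
proof -
  from good have pm: "pm1_mat n A" "pm1_mat n B" "pm1_mat n C" "pm1_mat n D"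
    and circ: "circulant_mat n A" "circulant_mat n B" "circulant_mat n C" "circulant_mat n D"
    and skew: "skew_mat n A" and sym: "symmetric_mat n B" "symmetric_mat n C" "symmetric_mat n D"
    unfolding good_matrices_def by blast+
  have "0 < n" and int_n: "int n = 2 * int m + 1"
    using n by simp_all
  have periodic: "row_seq n X (t mod (2 * int m + 1)) = row_seq n X t" for X t
    using row_seq_mod[of n X t] unfolding int_n .
  have pm1: "row_seq n X t \<in> {1, -1}" if "pm1_mat n X" for X t
    using row_seq_pm1[OF \<open>0 < n\<close> that] .
  have A_odd: "row_seq n A (-t) = - row_seq n A t" if "t \<noteq> 0" "\<bar>t\<bar> \<le> 2 * int m" for t
  proof -
    have "t mod int n \<noteq> 0"
      using that n by (auto simp: mod_eq_0_iff_dvd dest: dvd_imp_le_int)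
    then show ?thesis
      by (rule row_seq_uminus_skew[OF \<open>0 < n\<close> circ(1) skew])
  qed
  have skew_mod8: "8 dvd centered_autocorr m (row_seq n A) (int h)
      - (2 * int m - 5 - 2 * row_seq n A (int h) * row_seq n A (2 * int h))"
    using h by (intro centered_autocorr_skew_mod8[where x = "row_seq n A", OF periodic pm1[OF pm(1)]
        row_seq_zero_skew[OF \<open>0 < n\<close> skew] A_odd]) simp_all
  have even_mod8: "8 dvd centered_autocorr m (row_seq n X) (int h)
      - (2 * int m - 1 + 2 * row_seq n X 0 * row_seq n X (int h))"
    if "pm1_mat n X" "circulant_mat n X" "symmetric_mat n X" for X
    by (rule centered_autocorr_even_mod8[where x = "row_seq n X", OF periodic pm1[OF that(1)]
        row_seq_uminus_symmetric[OF \<open>0 < n\<close> that(2,3)]])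
  have "h < n"
    using n h by simp
  show ?thesis
    by (rule pm1_sign_identity_mod8[OF pm1[OF pm(1)] pm1[OF pm(1)] pm1[OF pm(2)] pm1[OF pm(2)]
          pm1[OF pm(3)] pm1[OF pm(3)] pm1[OF pm(4)] pm1[OF pm(4)]
          good_matrices_centered_autocorr_sum[OF good n h(1) \<open>h < n\<close>]
          skew_mod8 even_mod8[OF pm(2) circ(2) sym(1)] even_mod8[OF pm(3) circ(3) sym(2)]
          even_mod8[OF pm(4) circ(4) sym(3)]])
qed

lemma good_matrices_row_seq_identity:
  assumes good: "good_matrices n A B C D" and n: "n = 2 * m + 1" and k: "0 < k" "k < n"
  shows "row_seq n A (int k) * row_seq n B (int k) * row_seq n C (int k) * row_seq n D (int k)
       = - row_seq n A (2 * int k) * row_seq n B 0 * row_seq n C 0 * row_seq n D 0"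
proof (cases "k \<le> m")
  case True
  then show ?thesis
    using good_matrices_row_seq_identity_le[OF good n k(1)] by blast
next
  case False
  define h where "h = n - k"
  have h: "0 < h" "h \<le> m" and "0 < n"
    using n k False by (simp_all add: h_def)
  from good have circ: "circulant_mat n A" "circulant_mat n B" "circulant_mat n C" "circulant_mat n D"
    and skew: "skew_mat n A" and sym: "symmetric_mat n B" "symmetric_mat n C" "symmetric_mat n D"
    unfolding good_matrices_def by blast+
  have "int k mod int n = (- int h) mod int n" "(2 * int k) mod int n = (- (2 * int h)) mod int n"
    using k by (simp_all add: h_def mod_eq_dvd_iff algebra_simps)
  then have k_h: "row_seq n X (int k) = row_seq n X (- int h)"
    "row_seq n X (2 * int k) = row_seq n X (- (2 * int h))" for X
    by (auto intro: row_seq_cong)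
  have "int h mod int n \<noteq> 0" "(2 * int h) mod int n \<noteq> 0"
    using h n by simp_all
  then have "row_seq n A (int k) = - row_seq n A (int h)"
    and "row_seq n A (2 * int k) = - row_seq n A (2 * int h)"
    unfolding k_h by (simp_all add: row_seq_uminus_skew[OF \<open>0 < n\<close> circ(1) skew])
  moreover have "row_seq n X (int k) = row_seq n X (int h)"
    if "circulant_mat n X" "symmetric_mat n X" for X
    unfolding k_h by (rule row_seq_uminus_symmetric[OF \<open>0 < n\<close> that])
  ultimately show ?thesis
    using good_matrices_row_seq_identity_le[OF good n h] circ sym by simp
qed

theorem theorem4:
  fixes n :: nat and A B C D :: "nat \<Rightarrow> nat \<Rightarrow> int"
  assumes "odd n" and "n > 0"
    and "good_matrices n A B C D"
  shows "\<forall>k. 1 \<le> k \<and> k < n \<longrightarrow>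
           A 0 k * B 0 k * C 0 k * D 0 k = - A 0 ((2 * k) mod n) * B 0 0 * C 0 0 * D 0 0"
proof (intro allI impI)
  fix k
  assume k: "1 \<le> k \<and> k < n"
  obtain m where n: "n = 2 * m + 1"
    using \<open>odd n\<close> by (rule oddE)
  have "row_seq n A (2 * int k) = row_seq n A (int ((2 * k) mod n))"
    by (rule row_seq_cong) (simp add: zmod_int)
  also have "\<dots> = A 0 ((2 * k) mod n)"
    using \<open>n > 0\<close> by (simp add: row_seq_of_nat)
  finally show "A 0 k * B 0 k * C 0 k * D 0 k = - A 0 ((2 * k) mod n) * B 0 0 * C 0 0 * D 0 0"
    using good_matrices_row_seq_identity[OF \<open>good_matrices n A B C D\<close> n, of k] k \<open>n > 0\<close>
    by (simp add: row_seq_of_nat row_seq_of_nat[of 0, simplified])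
qed

end
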